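(* For every integer $q \ge 2$, the complete bipartite graph $K_{q-1,(q-1)^{q-1}}$ (viewed as an undirected graph) is $q$-solvable.
   Context: All graphs are finite. A directed graph $D=(V,E)$ has arcs $E \subseteq \{(u,v)\in V^2 : u \neq v\}$; bidirectional pairs are allowed. An undirected graph is identified with the directed graph having both arcs $(u,v)$ and $(v,u)$ for each edge $\{u,v\}$. The in-neighbourhood of $v$ is $N^-(v)=\{u : (u,v)\in E\}$. For an integer $q\ge 2$ let $[q]=\{0,1,\dots,q-1\}$, with arithmetic modulo $q$ where needed. A $D$-function over $[q]$ is a map $f=(f_v)_{v\in V}:[q]^V\to[q]^V$ such that each $f_v(x)$ depends only on $(x_u)_{u\in N^-(v)}$. The graph $D$ is $q$-solvable if there is a $D$-function $f$ over $[q]$ such that for every $x\in[q]^V$ there exists a vertex $v$ with $f_v(x)=x_v$. *)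

theory Defs
  imports Main
begin

definition digraph :: "'a set \<Rightarrow> ('a \<times> 'a) set \<Rightarrow> bool" where
  "digraph V E \<longleftrightarrow> finite V \<and> E \<subseteq> {(u,v). u \<in> V \<and> v \<in> V \<and> u \<noteq> v}"

definition in_nbhd :: "('a \<times> 'a) set \<Rightarrow> 'a \<Rightarrow> 'a set" where
  "in_nbhd E v = {u. (u, v) \<in> E}"

definition configs :: "'a set \<Rightarrow> nat \<Rightarrow> ('a \<Rightarrow> nat) set" where
  "configs V q = {x. (\<forall>v\<in>V. x v < q) \<and> (\<forall>v. v \<notin> V \<longrightarrow> x v = 0)}"

definition D_function :: "'a set \<Rightarrow> ('a \<times> 'a) set \<Rightarrow> nat \<Rightarrow> ('a \<Rightarrow> ('a \<Rightarrow> nat) \<Rightarrow> nat) \<Rightarrow> bool" where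
  "D_function V E q f \<longleftrightarrow>
     (\<forall>v\<in>V. \<forall>x\<in>configs V q. f v x < q) \<and>
     (\<forall>v\<in>V. \<forall>x\<in>configs V q. \<forall>y\<in>configs V q.
        (\<forall>u\<in>in_nbhd E v. x u = y u) \<longrightarrow> f v x = f v y)"

definition q_solvable :: "'a set \<Rightarrow> ('a \<times> 'a) set \<Rightarrow> nat \<Rightarrow> bool" where
  "q_solvable V E q \<longleftrightarrow>
     (\<exists>f. D_function V E q f \<and> (\<forall>x\<in>configs V q. \<exists>v\<in>V. f v x = x v))"

text \<open>Complete bipartite graph K_{m,n} as an undirected graph (both arcs per edge).\<close>
definition Kmn_V :: "nat \<Rightarrow> nat \<Rightarrow> (nat + nat) set" where
  "Kmn_V m n = Inl ` {..<m} \<union> Inr ` {..<n}"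

definition Kmn_E :: "nat \<Rightarrow> nat \<Rightarrow> ((nat + nat) \<times> (nat + nat)) set" where
  "Kmn_E m n = {(Inl i, Inr j) | i j. i < m \<and> j < n} \<union> {(Inr j, Inl i) | i j. i < m \<and> j < n}"

end

theory Submission
  imports Defs
begin

text \<open>
  Let \<open>m = q - 1\<close>. The left vertices carry a word \<open>x \<in> [q]^m\<close>, and the right vertices are indexed
  by the words \<open>h \<in> [m]^m\<close>. Right vertex \<open>h\<close> guesses the first position at which \<open>x\<close> agrees
  with \<open>h\<close> (or \<open>m\<close> if there is none). If all right vertices guess wrong, their values
  \<open>y h \<le> m\<close> exclude enough words that the left vertices can choose a word \<open>L\<close> agreeing
  with \<open>x\<close> somewhere. Such an \<open>L\<close> exists by induction on the length: either every letter
  \<open>c < m\<close> starts some \<open>h\<close> with \<open>y h = 0\<close>, which forces \<open>x\<^sub>0 = m\<close>; or some \<open>c < m\<close> has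
  \<open>y (c # hs) \<ge> 1\<close> for all \<open>hs\<close>, and then \<open>x\<^sub>0 \<noteq> c\<close> makes the tail of \<open>x\<close> escape the
  shifted values \<open>y (c # hs) - 1\<close>, so \<open>L = c # L'\<close> works.
\<close>

definition words :: "nat \<Rightarrow> 'a set \<Rightarrow> 'a list set" where
  "words k A = {xs. set xs \<subseteq> A \<and> length xs = k}"

lemma words_0 [simp]: "words 0 A = {[]}"
  by (auto simp: words_def)

lemma Cons_in_words_Suc_iff [simp]: "x # xs \<in> words (Suc k) A \<longleftrightarrow> x \<in> A \<and> xs \<in> words k A"
  by (auto simp: words_def)

lemma in_words_SucE:
  assumes "xs \<in> words (Suc k) A"
  obtains x xs' where "xs = x # xs'" "x \<in> A" "xs' \<in> words k A"
  using assms by (cases xs) (auto simp: words_def)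

fun first_agreement :: "'a list \<Rightarrow> 'a list \<Rightarrow> nat" where
  "first_agreement (h # hs) (x # xs) = (if x = h then 0 else Suc (first_agreement hs xs))"
| "first_agreement _ _ = 0"

lemma first_agreement_le: "first_agreement h x \<le> length h"
  by (induction h x rule: first_agreement.induct) auto

lemma escaping_words_hit_some_word:
  assumes "\<forall>h\<in>words k {..<m}. y h \<le> k"
  shows "\<exists>L\<in>words k {..<Suc m}. \<forall>x\<in>words k {..<Suc m}.
           (\<forall>h\<in>words k {..<m}. first_agreement h x \<noteq> y h) \<longrightarrow> (\<exists>i<k. x ! i = L ! i)"
  using assms
proof (induction k arbitrary: y)
  case 0
  then show ?case by simp
next
  case (Suc k)
  show ?case
  proof (cases "\<exists>c<m. \<forall>hs\<in>words k {..<m}. y (c # hs) \<noteq> 0")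
    case False
    have starts_with_m: "x0 = m"
      if escape: "\<forall>h\<in>words (Suc k) {..<m}. first_agreement h (x0 # xs) \<noteq> y h"
        and "x0 < Suc m" for x0 xs
    proof (rule ccontr)
      assume "x0 \<noteq> m"
      with \<open>x0 < Suc m\<close> have "x0 < m" by simp
      with False obtain hs where hs: "hs \<in> words k {..<m}" "y (x0 # hs) = 0" by blast
      have "first_agreement (x0 # hs) (x0 # xs) \<noteq> y (x0 # hs)"
        using bspec[OF escape, of "x0 # hs"] hs \<open>x0 < m\<close> by simp
      with hs show False by simp
    qed
    show ?thesis
    proof (intro bexI[of _ "replicate (Suc k) m"] ballI impI)
      fix x assume "x \<in> words (Suc k) {..<Suc m}"
        and escape: "\<forall>h\<in>words (Suc k) {..<m}. first_agreement h x \<noteq> y h"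
      then obtain x0 xs where "x = x0 # xs" "x0 < Suc m" by (auto elim!: in_words_SucE)
      with starts_with_m escape show "\<exists>i<Suc k. x ! i = (replicate (Suc k) m) ! i"
        by (intro exI[of _ 0]) auto
    qed (auto simp: words_def set_replicate_conv_if)
  next
    case True
    then obtain c where c: "c < m" and pos: "\<forall>hs\<in>words k {..<m}. y (c # hs) \<noteq> 0"
      by blast
    have "\<forall>hs\<in>words k {..<m}. y (c # hs) - 1 \<le> k"
    proof
      fix hs assume "hs \<in> words k {..<m}"
      with Suc.prems c have "y (c # hs) \<le> Suc k" by simp
      then show "y (c # hs) - 1 \<le> k" by simp
    qed
    from Suc.IH[OF this] obtain L where L: "L \<in> words k {..<Suc m}"
      and hit: "\<forall>x\<in>words k {..<Suc m}.
                  (\<forall>h\<in>words k {..<m}. first_agreement h x \<noteq> y (c # h) - 1) \<longrightarrow> (\<exists>i<k. x ! i = L ! i)"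
      by blast
    have "\<exists>i<Suc k. (x0 # xs) ! i = (c # L) ! i"
      if escape: "\<forall>h\<in>words (Suc k) {..<m}. first_agreement h (x0 # xs) \<noteq> y h"
        and xs: "xs \<in> words k {..<Suc m}" for x0 xs
    proof (cases "x0 = c")
      case False
      have "\<forall>h\<in>words k {..<m}. first_agreement h xs \<noteq> y (c # h) - 1"
      proof
        fix hs assume hs: "hs \<in> words k {..<m}"
        with bspec[OF escape, of "c # hs"] c False
        have "Suc (first_agreement hs xs) \<noteq> y (c # hs)" by simp
        with pos hs show "first_agreement hs xs \<noteq> y (c # hs) - 1" by force
      qed
      with hit xs obtain i where "i < k" "xs ! i = L ! i" by blast
      then show ?thesis by (intro exI[of _ "Suc i"]) simp
    qed auto
    with L c show ?thesis
      by (intro bexI[of _ "c # L"]) (auto elim!: in_words_SucE)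
  qed
qed

definition guess :: "nat \<Rightarrow> (nat list \<Rightarrow> nat) \<Rightarrow> nat list" where
  "guess m y = (SOME L. L \<in> words m {..<Suc m} \<and> (\<forall>x\<in>words m {..<Suc m}.
     (\<forall>h\<in>words m {..<m}. first_agreement h x \<noteq> y h) \<longrightarrow> (\<exists>i<m. x ! i = L ! i)))"

lemma
  assumes "\<forall>h\<in>words m {..<m}. y h \<le> m"
  shows guess_in_words: "guess m y \<in> words m {..<Suc m}"
    and guess_hits_escaping_word:
      "\<lbrakk>x \<in> words m {..<Suc m}; \<forall>h\<in>words m {..<m}. first_agreement h x \<noteq> y h\<rbrakk>
         \<Longrightarrow> \<exists>i<m. x ! i = guess m y ! i"
  using someI_ex[OF escaping_words_hit_some_word[OF assms, unfolded Bex_def]]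
  by (auto simp: guess_def Bex_def)

lemma in_nbhd_Kmn_Inl: "i < m \<Longrightarrow> in_nbhd (Kmn_E m n) (Inl i) = Inr ` {..<n}"
  by (auto simp: in_nbhd_def Kmn_E_def)

lemma in_nbhd_Kmn_Inr: "j < n \<Longrightarrow> in_nbhd (Kmn_E m n) (Inr j) = Inl ` {..<m}"
  by (auto simp: in_nbhd_def Kmn_E_def)

lemma Kmn_V_iff [simp]:
  "Inl i \<in> Kmn_V m n \<longleftrightarrow> i < m"
  "Inr j \<in> Kmn_V m n \<longleftrightarrow> j < n"
  by (auto simp: Kmn_V_def)

lemma D_function_KmnI:
  fixes f :: "nat + nat \<Rightarrow> (nat + nat \<Rightarrow> nat) \<Rightarrow> nat"
  assumes "\<And>v x. v \<in> Kmn_V m n \<Longrightarrow> x \<in> configs (Kmn_V m n) q \<Longrightarrow> f v x < q"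
    and "\<And>i x y. i < m \<Longrightarrow> (\<forall>j<n. x (Inr j) = y (Inr j)) \<Longrightarrow> f (Inl i) x = f (Inl i) y"
    and "\<And>j x y. j < n \<Longrightarrow> (\<forall>i<m. x (Inl i) = y (Inl i)) \<Longrightarrow> f (Inr j) x = f (Inr j) y"
  shows "D_function (Kmn_V m n) (Kmn_E m n) q f"
  unfolding D_function_def
proof (intro conjI ballI impI)
  fix v and x y :: "nat + nat \<Rightarrow> nat"
  assume "v \<in> Kmn_V m n" and agree: "\<forall>u\<in>in_nbhd (Kmn_E m n) v. x u = y u"
  then show "f v x = f v y"
    by (cases v) (auto intro!: assms(2,3) simp: in_nbhd_Kmn_Inl in_nbhd_Kmn_Inr)
qed (use assms(1) in blast)

definition left_word :: "nat \<Rightarrow> (nat + nat \<Rightarrow> nat) \<Rightarrow> nat list" where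
  "left_word m x = map (\<lambda>i. x (Inl i)) [0..<m]"

definition right_values :: "nat \<Rightarrow> (nat \<Rightarrow> nat list) \<Rightarrow> (nat + nat \<Rightarrow> nat) \<Rightarrow> nat list \<Rightarrow> nat" where
  "right_values n enc x h = (if h \<in> enc ` {..<n} then x (Inr (inv_into {..<n} enc h)) else 0)"

definition agreement_strategy ::
    "nat \<Rightarrow> nat \<Rightarrow> (nat \<Rightarrow> nat list) \<Rightarrow> nat + nat \<Rightarrow> (nat + nat \<Rightarrow> nat) \<Rightarrow> nat" where
  "agreement_strategy m n enc v x = (case v of
      Inl i \<Rightarrow> guess m (right_values n enc x) ! i
    | Inr j \<Rightarrow> first_agreement (enc j) (left_word m x))"

lemma left_word_in_words:
  "x \<in> configs (Kmn_V m n) (Suc m) \<Longrightarrow> left_word m x \<in> words m {..<Suc m}"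
  by (auto simp: left_word_def configs_def words_def)

lemma right_values_le:
  assumes "x \<in> configs (Kmn_V m n) (Suc m)"
  shows "right_values n enc x h \<le> m"
  using assms inv_into_into[of h enc "{..<n}"]
  by (auto simp: right_values_def configs_def less_Suc_eq_le)

lemma left_word_cong: "\<forall>i<m. x (Inl i) = y (Inl i) \<Longrightarrow> left_word m x = left_word m y"
  by (simp add: left_word_def)

lemma right_values_cong:
  assumes "\<forall>j<n. x (Inr j) = y (Inr j)"
  shows "right_values n enc x = right_values n enc y"
proof
  fix h show "right_values n enc x h = right_values n enc y h"
    using assms inv_into_into[of h enc "{..<n}"] by (simp add: right_values_def)
qed

lemma D_function_agreement_strategy:
  assumes enc: "bij_betw enc {..<n} (words m {..<m})"
  shows "D_function (Kmn_V m n) (Kmn_E m n) (Suc m) (agreement_strategy m n enc)"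
proof (rule D_function_KmnI)
  fix v x assume v: "v \<in> Kmn_V m n" and x: "x \<in> configs (Kmn_V m n) (Suc m)"
  show "agreement_strategy m n enc v x < Suc m"
  proof (cases v)
    case (Inl i)
    have "guess m (right_values n enc x) \<in> words m {..<Suc m}"
      using guess_in_words right_values_le[OF x] by blast
    moreover have "i < m" using Inl v by simp
    ultimately show ?thesis
      using Inl by (simp add: agreement_strategy_def words_def) (metis lessThan_iff nth_mem subsetD)
  next
    case (Inr j)
    with v enc have "length (enc j) = m" by (auto simp: bij_betw_def words_def)
    with Inr first_agreement_le[of "enc j"] show ?thesis
      by (simp add: agreement_strategy_def le_imp_less_Suc)
  qed
qed (simp_all add: agreement_strategy_def, metis right_values_cong, metis left_word_cong)

lemma agreement_strategy_guesses_right: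
  assumes enc: "bij_betw enc {..<n} (words m {..<m})"
    and x: "x \<in> configs (Kmn_V m n) (Suc m)"
  shows "\<exists>v\<in>Kmn_V m n. agreement_strategy m n enc v x = x v"
proof (cases "\<exists>j<n. agreement_strategy m n enc (Inr j) x = x (Inr j)")
  case False
  have "first_agreement h (left_word m x) \<noteq> right_values n enc x h" if "h \<in> words m {..<m}" for h
  proof -
    define j where "j = inv_into {..<n} enc h"
    from enc that have h: "h \<in> enc ` {..<n}" by (simp add: bij_betw_def)
    then have "j < n" "enc j = h"
      using inv_into_into[OF h] f_inv_into_f[OF h] by (simp_all add: j_def)
    with False h show ?thesis
      by (auto simp: agreement_strategy_def right_values_def j_def)
  qed
  with guess_hits_escaping_word[OF _ left_word_in_words[OF x]] right_values_le[OF x]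
  obtain i where "i < m" "left_word m x ! i = guess m (right_values n enc x) ! i"
    by blast
  then have "i < m" "agreement_strategy m n enc (Inl i) x = x (Inl i)"
    by (simp_all add: agreement_strategy_def left_word_def)
  then show ?thesis by force
qed force

lemma Kmn_power_solvable: "q_solvable (Kmn_V m (m ^ m)) (Kmn_E m (m ^ m)) (Suc m)"
proof -
  have "finite (words m {..<m})" "card (words m {..<m}) = m ^ m"
    by (simp_all add: words_def finite_lists_length_eq card_lists_length_eq)
  then obtain enc where "bij_betw enc {..<m ^ m} (words m {..<m})"
    using ex_bij_betw_nat_finite by (metis atLeast0LessThan)
  with D_function_agreement_strategy agreement_strategy_guesses_right show ?thesis
    unfolding q_solvable_def by blast
qed

theorem theorem1:
  fixes q :: nat
  assumes "q \<ge> 2"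
  shows "q_solvable (Kmn_V (q - 1) ((q - 1) ^ (q - 1))) (Kmn_E (q - 1) ((q - 1) ^ (q - 1))) q"
  using Kmn_power_solvable[of "q - 1"] assms by (simp add: Suc_diff_1)

end
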